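(* Consider any run of Algorithm 1 (described in the context) under the standing assumption. Then: (i) if $k\in\mathcal{B}\cap\mathcal{S}$, then $f_k-f_{k+1}\ge\tfrac{\eta}{2}\epsilon_H\delta_k^2$; (ii) if $k\in\mathcal{I}\cap\mathcal{S}$, then \[ f_k-f_{k+1}\ \ge\ \tfrac{\eta}{2(1+2L_H)}\min\big\{\|g_{k+1}\|^2\epsilon_H^{-1},\ \epsilon_H^3\big\}. \]
   Context: Let $f:\mathbb{R}^n\to\mathbb{R}$ with gradient $g=\nabla f$ and Hessian $H=\nabla^2 f$; $\|\cdot\|$ is the Euclidean norm and $\lambda_{\min}(\cdot)$ the smallest eigenvalue of a symmetric matrix. Write $f_k=f(x_k)$, $g_k=g(x_k)$, $H_k=H(x_k)$ and $m_k(x):=f_k+g_k^T(x-x_k)+\tfrac12(x-x_k)^TH_k(x-x_k)$. Algorithm 1 (exact trust-region Newton method). Inputs: tolerances $\epsilon_g,\epsilon_H>0$; parameters $\gamma_1\in(0,1)$, $\gamma_2\in[1,\infty)$, $\psi\in(1/\gamma_2,1]$; $x_0\in\mathbb{R}^n$; $\delta_0>0$; $\delta_{\max}\ge\delta_0$; $\eta\in(0,1)$. For $k=0,1,2,\dots$: evaluate $g_k,H_k$; if $\|g_k\|\le\epsilon_g$, compute $\lambda_k=\lambda_{\min}(H_k)$ and, if $\lambda_k\ge-\epsilon_H$, return $x_k$ (terminate). Otherwise compute $s_k$ as a global solution of $\min_{s}\ m_k(x_k+s)+\tfrac12\epsilon_H\|s\|^2$ subject to $\|s\|\le\delta_k$.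 Set $\rho_k=\frac{f_k-f(x_k+s_k)}{m_k(x_k)-m_k(x_k+s_k)}$. If $\rho_k\ge\eta$: $x_{k+1}=x_k+s_k$, and $\delta_{k+1}=\min\{\gamma_2\delta_k,\delta_{\max}\}$ if $\|s_k\|\ge\psi\delta_k$, else $\delta_{k+1}=\delta_k$. If $\rho_k<\eta$: $x_{k+1}=x_k$ and $\delta_{k+1}=\gamma_1\|s_k\|$. $\mathcal{K}$ is the set of indices $k$ such that iteration $k$ is completed without termination; $\mathcal{S}=\{k\in\mathcal{K}:\rho_k\ge\eta\}$, $\mathcal{I}=\{k\in\mathcal{K}:\|s_k\|<\delta_k\}$, $\mathcal{B}=\{k\in\mathcal{K}:\|s_k\|=\delta_k\}$. Standing assumption: the sequence $\{f_k\}$ is bounded below by some $f_{\rm low}\in\mathbb{R}$, and all segments $[x_k,x_k+s_k]$ lie in an open set on which $f$ is twice continuously differentiable with gradient Lipschitz continuous with constant $L_g>0$ and Hessian Lipschitz continuous with constant $L_H>0$. *)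

theory Defs
  imports "HOL-Analysis.Analysis"
begin

definition lambda_min :: "real^'n^'n \<Rightarrow> real" where
  "lambda_min A = Min {l. \<exists>v::real^'n. v \<noteq> 0 \<and> A *v v = l *\<^sub>R v}"

definition tr_model ::
  "(real^'n \<Rightarrow> real) \<Rightarrow> (real^'n \<Rightarrow> real^'n) \<Rightarrow> (real^'n \<Rightarrow> real^'n^'n)
    \<Rightarrow> real^'n \<Rightarrow> real^'n \<Rightarrow> real" where
  "tr_model f g H xk x =
     f xk + g xk \<bullet> (x - xk) + 1/2 * ((x - xk) \<bullet> (H xk *v (x - xk)))"

definition tr_stop ::
  "(real^'n \<Rightarrow> real^'n) \<Rightarrow> (real^'n \<Rightarrow> real^'n^'n) \<Rightarrow> real \<Rightarrow> real \<Rightarrow> real^'n \<Rightarrow> bool" where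
  "tr_stop g H eps_g eps_H y \<longleftrightarrow> norm (g y) \<le> eps_g \<and> lambda_min (H y) \<ge> - eps_H"

definition tr_K ::
  "(real^'n \<Rightarrow> real^'n) \<Rightarrow> (real^'n \<Rightarrow> real^'n^'n) \<Rightarrow> real \<Rightarrow> real \<Rightarrow> (nat \<Rightarrow> real^'n) \<Rightarrow> nat set" where
  "tr_K g H eps_g eps_H x = {k. \<forall>j\<le>k. \<not> tr_stop g H eps_g eps_H (x j)}"

definition tr_rho ::
  "(real^'n \<Rightarrow> real) \<Rightarrow> (real^'n \<Rightarrow> real^'n) \<Rightarrow> (real^'n \<Rightarrow> real^'n^'n)
    \<Rightarrow> real^'n \<Rightarrow> real^'n \<Rightarrow> real" where
  "tr_rho f g H xk sk =
     (f xk - f (xk + sk)) / (tr_model f g H xk xk - tr_model f g H xk (xk + sk))"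

end

theory Submission
  imports Defs
begin

(* Both bounds rest on the sufficient decrease f_k - f_(k+1) >= eta (eps_H/2) |s_k|^2 of a
   successful step: comparing the subproblem objective at s_k with its value at s = 0 shows
   that the model decreases by at least (eps_H/2) |s_k|^2, and rho_k >= eta transfers this
   to f. On the boundary |s_k| = delta_k this is (i).
   An interior step is an unconstrained stationary point of the regularized model, so
   g_k + H_k s_k + eps_H s_k = 0; this needs H_k to be symmetric, which follows from the
   Lipschitz continuity of the Hessian via second differences of f. Linearizing g along
   the step then gives |g_(k+1)| <= L_H |s_k|^2 + eps_H |s_k|, and distinguishing whether
   |s_k| is small compared with eps_H turns the decrease into (ii). *)

lemma linearization_error_le_Lipschitz_derivative:
  fixes g :: "'a::real_normed_vector \<Rightarrow> 'b::real_normed_vector"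
  assumes seg: "closed_segment a b \<subseteq> U"
    and g_deriv: "\<And>y. y \<in> U \<Longrightarrow> (g has_derivative g' y) (at y)"
    and g'_lip: "\<And>y z. y \<in> U \<Longrightarrow> z \<in> U \<Longrightarrow> onorm (\<lambda>v. g' y v - g' z v) \<le> L * norm (y - z)"
    and "L \<ge> 0"
  shows "norm (g b - g a - g' a (b - a)) \<le> L * (norm (b - a))\<^sup>2"
proof -
  have "norm (g b - g a - g' a (b - a)) \<le> norm (b - a) * (L * norm (b - a))"
  proof (rule differentiable_bound_linearization[where S="closed_segment a b"])
    fix t :: real assume "t \<in> {0..1}"
    then show "a + t *\<^sub>R (b - a) \<in> closed_segment a b"
      by (auto simp: closed_segment_def algebra_simps intro!: exI[of _ t])
  next
    fix y assume "y \<in> closed_segment a b"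
    then show "(g has_derivative g' y) (at y within closed_segment a b)"
      using g_deriv seg has_derivative_at_withinI by blast
  next
    fix y assume y: "y \<in> closed_segment a b"
    then have "onorm (\<lambda>v. g' y v - g' a v) \<le> L * norm (y - a)"
      using g'_lip seg by auto
    also have "\<dots> \<le> L * norm (b - a)"
      using segment_bound1[OF y] \<open>L \<ge> 0\<close> by (rule mult_left_mono)
    finally show "onorm (g' y - g' a) \<le> L * norm (b - a)"
      by (simp add: fun_diff_def)
  qed simp
  then show ?thesis by (simp add: power2_eq_square mult_ac)
qed

lemma linearization_error_le_Lipschitz_derivative_at:
  fixes g :: "'a::real_normed_vector \<Rightarrow> 'b::real_normed_vector"
  assumes seg: "closed_segment p (p + w) \<subseteq> U" and "y \<in> U"
    and g_deriv: "\<And>y. y \<in> U \<Longrightarrow> (g has_derivative g' y) (at y)"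
    and g'_lip: "\<And>y z. y \<in> U \<Longrightarrow> z \<in> U \<Longrightarrow> onorm (\<lambda>v. g' y v - g' z v) \<le> L * norm (y - z)"
    and "L \<ge> 0"
  shows "norm (g (p + w) - g p - g' y w) \<le> L * norm w * (norm w + norm (p - y))"
proof -
  have "p \<in> U" using seg by auto
  have "bounded_linear (\<lambda>v. g' p v - g' y v)"
    using g_deriv \<open>p \<in> U\<close> \<open>y \<in> U\<close> by (intro bounded_linear_sub has_derivative_bounded_linear) auto
  from onorm[OF this] have "norm (g' p w - g' y w) \<le> L * norm (p - y) * norm w"
    using g'_lip[OF \<open>p \<in> U\<close> \<open>y \<in> U\<close>] by (meson mult_right_mono norm_ge_zero order_trans)
  moreover have "norm (g (p + w) - g p - g' p w) \<le> L * (norm w)\<^sup>2"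
    using linearization_error_le_Lipschitz_derivative[OF seg g_deriv g'_lip \<open>L \<ge> 0\<close>] by simp
  ultimately show ?thesis
    using norm_triangle_ineq[of "g (p + w) - g p - g' p w" "g' p w - g' y w"]
    by (simp add: power2_eq_square algebra_simps)
qed

lemma has_real_derivative_along_line:
  fixes f :: "'a::real_inner \<Rightarrow> real"
  assumes "(f has_derivative (\<lambda>h. G \<bullet> h)) (at (p + a *\<^sub>R u))"
  shows "((\<lambda>a. f (p + a *\<^sub>R u)) has_real_derivative G \<bullet> u) (at a)"
proof -
  have "((\<lambda>a. p + a *\<^sub>R u) has_derivative (\<lambda>h. h *\<^sub>R u)) (at a)"
    by (auto intro!: derivative_eq_intros)
  from has_derivative_compose[OF this assms]
  show ?thesis by (simp add: has_field_derivative_def o_def mult_commute_abs)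
qed

lemma add_scaleR_add_scaleR_mem_ball:
  fixes y u v :: "'a::real_normed_vector"
  assumes "0 \<le> a" "a \<le> t" "0 \<le> b" "b \<le> t" "t * (norm u + norm v) < r"
  shows "y + a *\<^sub>R u + b *\<^sub>R v \<in> ball y r"
proof -
  have "norm (a *\<^sub>R u + b *\<^sub>R v) \<le> a * norm u + b * norm v"
    using norm_triangle_ineq[of "a *\<^sub>R u" "b *\<^sub>R v"] assms by simp
  also have "\<dots> \<le> t * (norm u + norm v)"
    using assms by (simp add: distrib_left add_mono mult_right_mono)
  finally have "dist y (y + (a *\<^sub>R u + b *\<^sub>R v)) < r"
    using assms by (metis add_diff_cancel_left' dist_commute dist_norm order.strict_trans1)
  then show ?thesis by (simp add: add.assoc)
qed

lemma second_difference_approx: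
  fixes f :: "'a::real_inner \<Rightarrow> real" and g :: "'a \<Rightarrow> 'a" and g' :: "'a \<Rightarrow> 'a \<Rightarrow> 'a"
  assumes ball: "ball y r \<subseteq> U" and t: "0 < t" "t * (norm u + norm v) < r"
    and f_deriv: "\<And>y. y \<in> U \<Longrightarrow> (f has_derivative (\<lambda>h. g y \<bullet> h)) (at y)"
    and g_deriv: "\<And>y. y \<in> U \<Longrightarrow> (g has_derivative g' y) (at y)"
    and g'_lip: "\<And>y z. y \<in> U \<Longrightarrow> z \<in> U \<Longrightarrow> onorm (\<lambda>v. g' y v - g' z v) \<le> L * norm (y - z)"
    and "L \<ge> 0"
  shows "\<bar>f (y + t *\<^sub>R u + t *\<^sub>R v) - f (y + t *\<^sub>R u) - f (y + t *\<^sub>R v) + f y - t\<^sup>2 * (u \<bullet> g' y v)\<bar>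
    \<le> L * norm u * norm v * (norm u + norm v) * t ^ 3"
proof -
  note in_ball = add_scaleR_add_scaleR_mem_ball[OF _ _ _ _ t(2), of _ _ y]
  define c where "c = u \<bullet> g' y v"
  define \<phi> where "\<phi> a = f (y + t *\<^sub>R v + a *\<^sub>R u) - f (y + a *\<^sub>R u) - a * t * c" for a
  have "(\<phi> has_real_derivative g (y + t *\<^sub>R v + a *\<^sub>R u) \<bullet> u - g (y + a *\<^sub>R u) \<bullet> u - t * c) (at a)"
    if "0 \<le> a" "a \<le> t" for a
  proof -
    have "y + t *\<^sub>R v + a *\<^sub>R u \<in> U" "y + a *\<^sub>R u \<in> U"
      using in_ball[of a t] in_ball[of a 0] that t ball by (auto simp: add_ac)
    then show ?thesis
      unfolding \<phi>_def
      by (auto intro!: derivative_eq_intros has_real_derivative_along_line f_deriv)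
  qed
  from MVT2[OF t(1) this] obtain z where z: "0 < z" "z < t"
    and mvt: "\<phi> t - \<phi> 0 = (t - 0) * (g (y + t *\<^sub>R v + z *\<^sub>R u) \<bullet> u - g (y + z *\<^sub>R u) \<bullet> u - t * c)"
    by blast
  define p where "p = y + z *\<^sub>R u"
  have "p \<in> ball y r" "p + t *\<^sub>R v \<in> ball y r"
    using in_ball[of z 0] in_ball[of z t] z by (simp_all add: p_def add_ac)
  then have seg: "closed_segment p (p + t *\<^sub>R v) \<subseteq> U"
    using ball closed_segment_subset[OF _ _ convex_ball] by blast
  have "y \<in> U"
    using in_ball[of 0 0] t ball by auto
  have "norm (g (p + t *\<^sub>R v) - g p - t *\<^sub>R g' y v) \<le> L * (t * norm v) * (t * norm v + z * norm u)"
    using linearization_error_le_Lipschitz_derivative_at[OF seg \<open>y \<in> U\<close> g_deriv g'_lip \<open>L \<ge> 0\<close>] t z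
      linear_scale[OF has_derivative_linear[OF g_deriv[OF \<open>y \<in> U\<close>]]]
    by (simp add: p_def)
  also have "\<dots> \<le> L * (t * norm v) * (t * norm v + t * norm u)"
    using z t \<open>L \<ge> 0\<close> by (intro mult_left_mono add_left_mono mult_right_mono) auto
  finally have g_incr: "norm (g (p + t *\<^sub>R v) - g p - t *\<^sub>R g' y v) \<le> L * norm v * (norm u + norm v) * t\<^sup>2"
    by (simp add: power2_eq_square algebra_simps)
  have "f (y + t *\<^sub>R u + t *\<^sub>R v) - f (y + t *\<^sub>R u) - f (y + t *\<^sub>R v) + f y - t\<^sup>2 * c
      = t * (u \<bullet> (g (p + t *\<^sub>R v) - g p - t *\<^sub>R g' y v))"
    using mvt by (simp add: \<phi>_def p_def c_def inner_commute power2_eq_square algebra_simps)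
  then have "\<bar>f (y + t *\<^sub>R u + t *\<^sub>R v) - f (y + t *\<^sub>R u) - f (y + t *\<^sub>R v) + f y - t\<^sup>2 * c\<bar>
      = t * \<bar>u \<bullet> (g (p + t *\<^sub>R v) - g p - t *\<^sub>R g' y v)\<bar>"
    using t by (simp add: abs_mult)
  also have "\<dots> \<le> t * (norm u * (L * norm v * (norm u + norm v) * t\<^sup>2))"
    using Cauchy_Schwarz_ineq2[of u] g_incr t
    by (meson mult_left_mono norm_ge_zero order_trans less_imp_le)
  finally show ?thesis
    by (simp add: c_def power2_eq_square power3_eq_cube mult_ac)
qed

lemma derivative_of_gradient_symmetric:
  fixes f :: "'a::real_inner \<Rightarrow> real" and g :: "'a \<Rightarrow> 'a" and g' :: "'a \<Rightarrow> 'a \<Rightarrow> 'a"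
  assumes "open U" "y \<in> U"
    and f_deriv: "\<And>y. y \<in> U \<Longrightarrow> (f has_derivative (\<lambda>h. g y \<bullet> h)) (at y)"
    and g_deriv: "\<And>y. y \<in> U \<Longrightarrow> (g has_derivative g' y) (at y)"
    and g'_lip: "\<And>y z. y \<in> U \<Longrightarrow> z \<in> U \<Longrightarrow> onorm (\<lambda>v. g' y v - g' z v) \<le> L * norm (y - z)"
    and "L \<ge> 0"
  shows "u \<bullet> g' y v = v \<bullet> g' y u"
proof -
  obtain r where "r > 0" and ball: "ball y r \<subseteq> U"
    using \<open>open U\<close> \<open>y \<in> U\<close> openE by blast
  define K where "K = 2 * L * norm u * norm v * (norm u + norm v)"
  \<comment> \<open>The second difference of \<open>f\<close> is symmetric in \<open>u, v\<close> and equals both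
    \<open>t\<^sup>2 (u \<bullet> g' y v)\<close> and \<open>t\<^sup>2 (v \<bullet> g' y u)\<close> up to \<open>O(t\<^sup>3)\<close>.\<close>
  have close: "\<forall>\<^sub>F t in at_right 0. \<bar>u \<bullet> g' y v - v \<bullet> g' y u\<bar> \<le> K * t"
  proof (rule eventually_at_rightI)
    show "0 < r / (norm u + norm v + 1)"
      using \<open>r > 0\<close> by (simp add: add_nonneg_pos)
  next
    fix t assume "t \<in> {0<..<r / (norm u + norm v + 1)}"
    then have t: "0 < t" "t * (norm u + norm v + 1) < r"
      by (simp_all add: less_divide_eq add_nonneg_pos)
    then have tuv: "t * (norm u + norm v) < r" "t * (norm v + norm u) < r"
      by (simp_all add: algebra_simps)
    have "\<bar>t\<^sup>2 * (u \<bullet> g' y v) - t\<^sup>2 * (v \<bullet> g' y u)\<bar> \<le> t\<^sup>2 * (K * t)"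
      using second_difference_approx[OF ball t(1) tuv(1) f_deriv g_deriv g'_lip \<open>L \<ge> 0\<close>]
        second_difference_approx[OF ball t(1) tuv(2) f_deriv g_deriv g'_lip \<open>L \<ge> 0\<close>]
      by (simp add: K_def power2_eq_square power3_eq_cube algebra_simps abs_le_iff)
    then show "\<bar>u \<bullet> g' y v - v \<bullet> g' y u\<bar> \<le> K * t"
      using t by (simp add: abs_mult power2_eq_square right_diff_distrib[symmetric])
  qed
  have "((\<lambda>t. K * t) \<longlongrightarrow> 0) (at_right 0)"
    by (auto intro!: tendsto_eq_intros)
  from tendsto_lowerbound[OF this close]
  have "\<bar>u \<bullet> g' y v - v \<bullet> g' y u\<bar> \<le> 0" by simp
  then show ?thesis by simp
qed

lemma regularized_quadratic_interior_minimizer_stationary: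
  fixes A :: "real^'n^'n" and c s :: "real^'n"
  assumes sym: "\<And>u v. u \<bullet> (A *v v) = v \<bullet> (A *v u)"
    and interior: "norm s < r"
    and minimal: "\<And>t. norm t \<le> r \<Longrightarrow>
      c \<bullet> s + 1/2 * (s \<bullet> (A *v s)) + 1/2 * eps * (norm s)\<^sup>2
        \<le> c \<bullet> t + 1/2 * (t \<bullet> (A *v t)) + 1/2 * eps * (norm t)\<^sup>2"
  shows "c + A *v s + eps *\<^sub>R s = 0"
proof -
  define q where "q t = c \<bullet> t + 1/2 * (t \<bullet> (A *v t)) + 1/2 * eps * (t \<bullet> t)" for t
  define G where "G = c + A *v s + eps *\<^sub>R s"
  have "(q has_derivative (\<lambda>h. c \<bullet> h + 1/2 * (h \<bullet> (A *v s) + s \<bullet> (A *v h))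
          + 1/2 * eps * (h \<bullet> s + s \<bullet> h))) (at s)"
    unfolding q_def
    by (auto intro!: derivative_eq_intros
        bounded_linear.has_derivative[OF matrix_vector_mul_bounded_linear])
      (simp add: fun_eq_iff field_simps)
  also have "(\<lambda>h. c \<bullet> h + 1/2 * (h \<bullet> (A *v s) + s \<bullet> (A *v h)) + 1/2 * eps * (h \<bullet> s + s \<bullet> h))
      = (\<lambda>h. G \<bullet> h)"
    unfolding sym[of s] by (simp add: fun_eq_iff G_def inner_add_left inner_add_right inner_commute)
  finally have "(q has_derivative (\<lambda>h. G \<bullet> h)) (at s)" .
  moreover have "\<forall>t\<in>ball 0 r. q s \<le> q t"
    using minimal by (simp add: q_def power2_norm_eq_inner)
  ultimately have "(\<lambda>h. G \<bullet> h) = (\<lambda>h. 0)"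
    using differential_zero_maxmin[of s "ball 0 r"] interior by auto
  then have "G \<bullet> G = 0" by meson
  then show ?thesis by (simp add: G_def)
qed

lemma norm_gradient_after_regularized_Newton_step:
  fixes g :: "'a::real_normed_vector \<Rightarrow> 'a"
  assumes seg: "closed_segment x (x + s) \<subseteq> U"
    and g_deriv: "\<And>y. y \<in> U \<Longrightarrow> (g has_derivative g' y) (at y)"
    and g'_lip: "\<And>y z. y \<in> U \<Longrightarrow> z \<in> U \<Longrightarrow> onorm (\<lambda>v. g' y v - g' z v) \<le> L * norm (y - z)"
    and "L \<ge> 0" "eps \<ge> 0"
    and newton: "g x + g' x s + eps *\<^sub>R s = 0"
  shows "norm (g (x + s)) \<le> L * (norm s)\<^sup>2 + eps * norm s"
proof -
  have "g (x + s) = (g (x + s) - g x - g' x s) - eps *\<^sub>R s"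
    using newton by (simp add: algebra_simps eq_neg_iff_add_eq_0[symmetric])
  also have "norm \<dots> \<le> norm (g (x + s) - g x - g' x s) + eps * norm s"
    using norm_triangle_ineq4[of _ "eps *\<^sub>R s"] \<open>eps \<ge> 0\<close> by simp
  also have "\<dots> \<le> L * (norm s)\<^sup>2 + eps * norm s"
    using linearization_error_le_Lipschitz_derivative[OF seg g_deriv g'_lip \<open>L \<ge> 0\<close>] by simp
  finally show ?thesis .
qed

lemma tr_interior_step_norm_gradient_le:
  fixes f :: "real^'n \<Rightarrow> real" and g :: "real^'n \<Rightarrow> real^'n" and H :: "real^'n \<Rightarrow> real^'n^'n"
  assumes "open U" and seg: "closed_segment xk (xk + s) \<subseteq> U"
    and f_deriv: "\<And>y. y \<in> U \<Longrightarrow> (f has_derivative (\<lambda>h. g y \<bullet> h)) (at y)"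
    and g_deriv: "\<And>y. y \<in> U \<Longrightarrow> (g has_derivative (\<lambda>h. H y *v h)) (at y)"
    and H_lip: "\<And>y z. y \<in> U \<Longrightarrow> z \<in> U \<Longrightarrow> onorm (\<lambda>v. (H y - H z) *v v) \<le> L * norm (y - z)"
    and "L \<ge> 0" "eps \<ge> 0"
    and interior: "norm s < r"
    and minimal: "\<And>t. norm t \<le> r \<Longrightarrow>
      tr_model f g H xk (xk + s) + 1/2 * eps * (norm s)\<^sup>2
        \<le> tr_model f g H xk (xk + t) + 1/2 * eps * (norm t)\<^sup>2"
  shows "norm (g (xk + s)) \<le> L * (norm s)\<^sup>2 + eps * norm s"
proof -
  have H_lip': "\<And>y z. y \<in> U \<Longrightarrow> z \<in> U \<Longrightarrow> onorm (\<lambda>v. H y *v v - H z *v v) \<le> L * norm (y - z)"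
    using H_lip by (simp add: matrix_vector_mult_diff_rdistrib)
  have "u \<bullet> (H xk *v v) = v \<bullet> (H xk *v u)" for u v
    using seg \<open>L \<ge> 0\<close>
    by (intro derivative_of_gradient_symmetric[OF \<open>open U\<close> _ f_deriv g_deriv H_lip']) auto
  then have "g xk + H xk *v s + eps *\<^sub>R s = 0"
    using minimal
    by (intro regularized_quadratic_interior_minimizer_stationary[OF _ interior])
      (simp_all add: tr_model_def add.assoc)
  then show ?thesis
    using norm_gradient_after_regularized_Newton_step[OF seg g_deriv H_lip'] \<open>L \<ge> 0\<close> \<open>eps \<ge> 0\<close>
    by simp
qed

lemma tr_successful_step_decrease:
  assumes "0 < eta" "0 \<le> eps"
    and model: "tr_model f g H xk (xk + s) + 1/2 * eps * (norm s)\<^sup>2 \<le> tr_model f g H xk xk"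
    and rho: "eta \<le> tr_rho f g H xk s"
  shows "eta * (eps / 2 * (norm s)\<^sup>2) \<le> f xk - f (xk + s)"
proof -
  define pred where "pred = tr_model f g H xk xk - tr_model f g H xk (xk + s)"
  have pred_ge: "eps / 2 * (norm s)\<^sup>2 \<le> pred"
    using model by (simp add: pred_def)
  \<comment> \<open>A vanishing denominator would give \<open>tr_rho = 0\<close> (division by zero), contradicting \<open>0 < eta\<close>.\<close>
  have "pred \<noteq> 0"
    using rho \<open>0 < eta\<close> by (auto simp: tr_rho_def pred_def)
  moreover have "0 \<le> eps / 2 * (norm s)\<^sup>2"
    using \<open>0 \<le> eps\<close> by simp
  ultimately have "0 < pred"
    using pred_ge by linarith
  then have "eta * pred \<le> f xk - f (xk + s)"
    using rho by (simp add: tr_rho_def pred_def le_divide_eq)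
  moreover have "eta * (eps / 2 * (norm s)\<^sup>2) \<le> eta * pred"
    using pred_ge \<open>0 < eta\<close> by simp
  ultimately show ?thesis by linarith
qed

lemma min_div_cube_le_of_le_quadratic:
  fixes eps L sig G :: real
  assumes "eps > 0" "L > 0" "sig \<ge> 0" "G \<ge> 0" and G_le: "G \<le> L * sig\<^sup>2 + eps * sig"
  shows "min (G\<^sup>2 / eps) (eps ^ 3) \<le> (1 + 2 * L) * eps * sig\<^sup>2"
proof (cases "eps\<^sup>2 \<le> (1 + 2 * L) * sig\<^sup>2")
  case True
  then have "eps * eps\<^sup>2 \<le> eps * ((1 + 2 * L) * sig\<^sup>2)"
    using \<open>eps > 0\<close> by simp
  then show ?thesis by (simp add: power2_eq_square power3_eq_cube mult_ac min_le_iff_disj)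
next
  case False
  then have small: "2 * L * sig\<^sup>2 < eps\<^sup>2 - sig\<^sup>2" by (simp add: algebra_simps)
  moreover have "0 \<le> 2 * L * sig\<^sup>2"
    using \<open>L > 0\<close> by simp
  ultimately have "sig\<^sup>2 < eps\<^sup>2" by linarith
  then have "sig < eps"
    using \<open>eps > 0\<close> by (simp add: power_less_imp_less_base)
  \<comment> \<open>\<open>(3 eps - sig)(eps - sig) \<ge> 0\<close> absorbs the cross term \<open>2 sig eps\<close>.\<close>
  then have "0 \<le> (3 * eps - sig) * (eps - sig)"
    using \<open>sig \<ge> 0\<close> by simp
  with small have "L * sig\<^sup>2 + 2 * sig * eps \<le> 2 * eps\<^sup>2"
    by (simp add: power2_eq_square algebra_simps)
  then have "L * (L * sig\<^sup>2 + 2 * sig * eps) + eps\<^sup>2 \<le> L * (2 * eps\<^sup>2) + eps\<^sup>2"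
    using \<open>L > 0\<close> by simp
  then have "(L * sig + eps)\<^sup>2 \<le> (1 + 2 * L) * eps\<^sup>2"
    by (simp add: power2_eq_square algebra_simps)
  have "G\<^sup>2 \<le> (sig * (L * sig + eps))\<^sup>2"
    using \<open>G \<ge> 0\<close> G_le by (intro power_mono) (simp_all add: power2_eq_square algebra_simps)
  also have "\<dots> = sig\<^sup>2 * (L * sig + eps)\<^sup>2"
    by (rule power_mult_distrib)
  also have "\<dots> \<le> sig\<^sup>2 * ((1 + 2 * L) * eps\<^sup>2)"
    using \<open>(L * sig + eps)\<^sup>2 \<le> (1 + 2 * L) * eps\<^sup>2\<close> by (simp add: mult_left_mono)
  finally have "G\<^sup>2 / eps \<le> (1 + 2 * L) * eps * sig\<^sup>2"
    using \<open>eps > 0\<close> by (simp add: divide_le_eq power2_eq_square algebra_simps)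
  then show ?thesis by (simp add: min_le_iff_disj)
qed

theorem lemma2p3:
  fixes f :: "real^'n \<Rightarrow> real"
    and g :: "real^'n \<Rightarrow> real^'n"
    and H :: "real^'n \<Rightarrow> real^'n^'n"
    and eps_g eps_H gamma1 gamma2 psi delta0 delta_max eta f_low L_g L_H :: real
    and x s :: "nat \<Rightarrow> real^'n"
    and delta :: "nat \<Rightarrow> real"
    and U :: "(real^'n) set"
    and k :: nat
  defines "K \<equiv> tr_K g H eps_g eps_H x"
  defines "S \<equiv> {k\<in>K. tr_rho f g H (x k) (s k) \<ge> eta}"
  defines "I \<equiv> {k\<in>K. norm (s k) < delta k}"
  defines "B \<equiv> {k\<in>K. norm (s k) = delta k}"
  assumes eps: "eps_g > 0" "eps_H > 0"
    and params: "0 < gamma1" "gamma1 < 1" "1 \<le> gamma2" "1 / gamma2 < psi" "psi \<le> 1"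
    and delta_init: "delta 0 = delta0" "delta0 > 0" "delta_max \<ge> delta0"
    and eta: "0 < eta" "eta < 1"
    \<comment> \<open>s_k is a global solution of the regularized trust-region subproblem\<close>
    and step_feas: "\<And>k. k \<in> K \<Longrightarrow> norm (s k) \<le> delta k"
    and step_opt: "\<And>k t. k \<in> K \<Longrightarrow> norm t \<le> delta k \<Longrightarrow>
        tr_model f g H (x k) (x k + s k) + 1/2 * eps_H * (norm (s k))\<^sup>2
          \<le> tr_model f g H (x k) (x k + t) + 1/2 * eps_H * (norm t)\<^sup>2"
    \<comment> \<open>update rules\<close>
    and upd_succ: "\<And>k. k \<in> K \<Longrightarrow> tr_rho f g H (x k) (s k) \<ge> eta \<Longrightarrow>
        x (Suc k) = x k + s k \<and>
        delta (Suc k) = (if norm (s k) \<ge> psi * delta k then min (gamma2 * delta k) delta_max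
                         else delta k)"
    and upd_fail: "\<And>k. k \<in> K \<Longrightarrow> tr_rho f g H (x k) (s k) < eta \<Longrightarrow>
        x (Suc k) = x k \<and> delta (Suc k) = gamma1 * norm (s k)"
    \<comment> \<open>standing assumption\<close>
    and bdd_below: "\<And>k. (\<forall>j<k. j \<in> K) \<Longrightarrow> f (x k) \<ge> f_low"
    and U_open: "open U"
    and segs: "\<And>k. k \<in> K \<Longrightarrow> closed_segment (x k) (x k + s k) \<subseteq> U"
    and f_deriv: "\<And>y. y \<in> U \<Longrightarrow> (f has_derivative (\<lambda>h. g y \<bullet> h)) (at y)"
    and g_deriv: "\<And>y. y \<in> U \<Longrightarrow> (g has_derivative (\<lambda>h. H y *v h)) (at y)"
    and H_cont: "continuous_on U H"
    and L_pos: "L_g > 0" "L_H > 0"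
    and g_lip: "\<And>y z. y \<in> U \<Longrightarrow> z \<in> U \<Longrightarrow> norm (g y - g z) \<le> L_g * norm (y - z)"
    and H_lip: "\<And>y z. y \<in> U \<Longrightarrow> z \<in> U \<Longrightarrow>
        onorm (\<lambda>v. (H y - H z) *v v) \<le> L_H * norm (y - z)"
  shows "(k \<in> B \<inter> S \<longrightarrow> f (x k) - f (x (Suc k)) \<ge> eta / 2 * eps_H * (delta k)\<^sup>2)
       \<and> (k \<in> I \<inter> S \<longrightarrow> f (x k) - f (x (Suc k)) \<ge>
            eta / (2 * (1 + 2 * L_H)) * min ((norm (g (x (Suc k))))\<^sup>2 / eps_H) (eps_H ^ 3))"
proof -
  have decrease: "eta * (eps_H / 2 * (norm (s k))\<^sup>2) \<le> f (x k) - f (x (Suc k))" if "k \<in> S"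
  proof -
    from that have "k \<in> K" and rho: "eta \<le> tr_rho f g H (x k) (s k)"
      by (auto simp: S_def)
    moreover have "norm (0::real^'n) \<le> delta k"
      using step_feas[OF \<open>k \<in> K\<close>] by (metis norm_ge_zero norm_zero order_trans)
    ultimately show ?thesis
      using tr_successful_step_decrease[OF eta(1) _ _ rho] step_opt[of k 0] upd_succ eps(2)
      by simp
  qed
  have "eta / (2 * (1 + 2 * L_H)) * min ((norm (g (x (Suc k))))\<^sup>2 / eps_H) (eps_H ^ 3)
      \<le> f (x k) - f (x (Suc k))" if "k \<in> I \<inter> S"
  proof -
    from that have "k \<in> K" "k \<in> S" and interior: "norm (s k) < delta k"
      by (auto simp: I_def)
    then have "x (Suc k) = x k + s k"
      using upd_succ by (auto simp: S_def)
    then have "norm (g (x (Suc k))) \<le> L_H * (norm (s k))\<^sup>2 + eps_H * norm (s k)"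
      using tr_interior_step_norm_gradient_le[OF U_open segs f_deriv g_deriv H_lip _ _ interior]
        step_opt \<open>k \<in> K\<close> L_pos eps by simp
    then have "min ((norm (g (x (Suc k))))\<^sup>2 / eps_H) (eps_H ^ 3) \<le> (1 + 2 * L_H) * eps_H * (norm (s k))\<^sup>2"
      by (intro min_div_cube_le_of_le_quadratic eps L_pos norm_ge_zero)
    then have "eta / (2 * (1 + 2 * L_H)) * min ((norm (g (x (Suc k))))\<^sup>2 / eps_H) (eps_H ^ 3)
        \<le> eta / (2 * (1 + 2 * L_H)) * ((1 + 2 * L_H) * eps_H * (norm (s k))\<^sup>2)"
      using eta L_pos by (intro mult_left_mono) auto
    also have "\<dots> = eta * (eps_H / 2 * (norm (s k))\<^sup>2)"
      using L_pos by (simp add: field_simps)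
    finally show ?thesis
      using decrease[OF \<open>k \<in> S\<close>] by linarith
  qed
  then show ?thesis
    using decrease by (auto simp: B_def)
qed

end
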